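(* Let $\epsilon>0$, $M\ge1$, and let $h^{\mathrm{Dir}}$ be the solution of the Dirichlet problem on ${\mathbb T}^{(M)}$ with the boundary condition $u$ below. Then for every $0\le n\le M$ and all distinct $z,y\in\{0,1\}^n$, $$|h^{\mathrm{Dir}}(z)-h^{\mathrm{Dir}}(y)|\ge\epsilon .$$
   Context: Binary tree: for $n\ge0$, $\{0,1\}^n$ is the set of vertices of generation $n$ (words $z=z_1\cdots z_n$; generation $0$ is the root $\emptyset$). For a vertex $z$ of generation $n$, its children are $z0,z1$, and for $0\le m\le n$, $z^{(m)}=z_1\cdots z_m$ is its ancestor in generation $m$. ${\mathbb T}^{(M)}$ is the tree of generations $0,\dots,M$. Dirichlet problem: given $M\ge1$ and $u:\{0,1\}^M\to\mathbb R$, its solution is the unique $h$ on the vertices of ${\mathbb T}^{(M)}$ with $h(\emptyset)=0$, $h(z)=u(z)$ for $z\in\{0,1\}^M$, and $h(z0)+h(z1)+h(z^{(n-1)})=3h(z)$ for all $z\in\{0,1\}^n$, $1\le n<M$. Boundary condition: $u(z)=\epsilon\sum_{\ell=2}^M2^{M-\ell}z_\ell+\tfrac12\epsilon$ if $z_1=1$, and $u(z)=-\epsilon\sum_{\ell=2}^M2^{M-\ell}z_\ell-\tfrac12\epsilon$ if $z_1=0$. *)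

theory Defs
  imports Main "HOL-Library.Multiset" Complex_Main
begin

text \<open>Vertices of the binary tree: words z = z_1 ... z_n over {0,1}, encoded as
  bool lists (True = 1), with z_l = z ! (l - 1). Generation n = lists of length n;
  the root is the empty list. Children of z are z @ [False] (= z0) and z @ [True] (= z1);
  the ancestor z^(n-1) of z in generation n is butlast z.\<close>

definition boundary_u :: "real \<Rightarrow> nat \<Rightarrow> bool list \<Rightarrow> real" where
  "boundary_u eps M z =
     (let s = (\<Sum>l = 2..M. 2 ^ (M - l) * of_bool (z ! (l - 1)))
      in if z ! 0 then eps * s + eps / 2 else - eps * s - eps / 2)"

definition dirichlet_solution :: "nat \<Rightarrow> (bool list \<Rightarrow> real) \<Rightarrow> (bool list \<Rightarrow> real) \<Rightarrow> bool" where
  "dirichlet_solution M u h \<longleftrightarrow>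
     h [] = 0 \<and>
     (\<forall>z. length z = M \<longrightarrow> h z = u z) \<and>
     (\<forall>z. 1 \<le> length z \<and> length z < M \<longrightarrow>
          h (z @ [False]) + h (z @ [True]) + h (butlast z) = 3 * h z)"

end

theory Submission
  imports Defs "HOL-Library.Sublist"
begin

text \<open>
  The Dirichlet solution is explicit. Let s(b) = +1 or -1 (sign_of), t_l(z) = s(z_1) s(z_l) for
  l \<ge> 2 and t_1(z) = s(z_1) (coord_sign), and let b_l(n) vanish for n < l and equal
  2^(M-l) q(n-l) / q(M-l) for n \<ge> l (radial_profile), where q(m) = 2 - 2^-m (growth) solves
  2q(m+2) - 3q(m+1) + q(m) = 0 with q(0) = 1, q(1) = 3/2. Each term b_l(|z|) t_l(z) satisfies the
  mean value relation: from generation l on because descendants inherit t_l and b_l is radially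
  harmonic there, and at generation l-1 because the two children carry opposite values of t_l.
  At generation M the sum is the binary expansion in the boundary data, so by the maximum principle
  h(z) = eps/2 * \<Sum>_l b_l(|z|) t_l(z).

  If z \<noteq> y first differ in coordinate l, the earlier terms cancel, the l-th differs by 2 b_l(n)
  and each later one by at most 2 b_j(n), so |h z - h y| \<ge> eps F_l(n) with
  F_l(n) = b_l(n) - \<Sum>_{j>l} b_j(n) (gap_bound). Finally F_l(M) = 1 is a geometric sum, and F_l is
  nonincreasing on [l, M]: it decreases at the first step, and the recurrence
  2F_l(n+1) - 3F_l(n) + F_l(n-1) = -2 b_{n+1}(n+1) \<le> 0 propagates the decrease.
\<close>

lemma dirichlet_max_principle:
  assumes sol: "dirichlet_solution M u h" and u: "\<And>z. length z = M \<Longrightarrow> u z \<le> 0"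
    and z: "length z \<le> M"
  shows "h z \<le> 0"
proof (rule ccontr)
  assume "\<not> h z \<le> 0"
  define S where "S = {w :: bool list. length w \<le> M}"
  have "finite S"
    using finite_lists_length_le[of "UNIV :: bool set" M] by (simp add: S_def)
  define m where "m = Max (h ` S)"
  have le_m: "h w \<le> m" if "length w \<le> M" for w
    using \<open>finite S\<close> that by (auto simp: m_def S_def)
  have "m \<in> h ` S"
    using \<open>finite S\<close> z unfolding m_def S_def by (intro Max_in) auto
  then obtain w where w: "length w \<le> M" "h w = m" by (auto simp: S_def)
  have "m > 0" using le_m[OF z] \<open>\<not> h z \<le> 0\<close> by simp
  txt \<open>A maximiser strictly inside the tree forces its parent to be a maximiser too,
    so there would be one at the root, where h vanishes.\<close>
  have "\<forall>w. length w = k \<longrightarrow> k \<le> M \<longrightarrow> h w \<noteq> m" for k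
  proof (induction k)
    case 0
    show ?case using sol \<open>m > 0\<close> by (simp add: dirichlet_solution_def)
  next
    case (Suc k)
    show ?case
    proof (intro allI impI notI)
      fix w assume w: "length w = Suc k" "Suc k \<le> M" "h w = m"
      show False
      proof (cases "Suc k = M")
        case True
        then show False using sol u[of w] w \<open>m > 0\<close> by (simp add: dirichlet_solution_def)
      next
        case False
        then have "h (w @ [False]) + h (w @ [True]) + h (butlast w) = 3 * m"
          using sol w by (simp add: dirichlet_solution_def)
        moreover have "h (w @ [False]) \<le> m" "h (w @ [True]) \<le> m"
          using w False by (simp_all add: le_m)
        ultimately have "h (butlast w) = m"
          using le_m[of "butlast w"] w by simp
        then show False using Suc.IH w by simp
      qed
    qed
  qed
  then show False using w by blast
qed

lemma dirichlet_solution_unique: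
  assumes "dirichlet_solution M u h" "dirichlet_solution M u g" "length z \<le> M"
  shows "h z = g z"
proof -
  have "dirichlet_solution M (\<lambda>_. 0) (\<lambda>w. h w - g w)"
       "dirichlet_solution M (\<lambda>_. 0) (\<lambda>w. g w - h w)"
    using assms(1,2) by (auto simp: dirichlet_solution_def algebra_simps)
  from this[THEN dirichlet_max_principle] show ?thesis
    using assms(3) by fastforce
qed

definition sign_of :: "bool \<Rightarrow> real" where
  "sign_of b = (if b then 1 else -1)"

definition coord_sign :: "nat \<Rightarrow> bool list \<Rightarrow> real" where
  "coord_sign l z = sign_of (z ! 0) * (if l = 1 then 1 else sign_of (z ! (l - 1)))"

definition growth :: "nat \<Rightarrow> real" where
  "growth m = 2 - (1 / 2) ^ m"

definition radial_profile :: "nat \<Rightarrow> nat \<Rightarrow> nat \<Rightarrow> real" where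
  "radial_profile M l n = (if l \<le> n then 2 ^ (M - l) * growth (n - l) / growth (M - l) else 0)"

definition tree_solution :: "real \<Rightarrow> nat \<Rightarrow> bool list \<Rightarrow> real" where
  "tree_solution eps M z = eps / 2 * (\<Sum>l = 1..M. radial_profile M l (length z) * coord_sign l z)"

lemma growth_pos: "growth m > 0"
  using power_le_one[of "1 / 2 :: real" m] by (simp add: growth_def)

lemma growth_recurrence: "2 * growth (Suc (Suc m)) - 3 * growth (Suc m) + growth m = 0"
  by (simp add: growth_def)

lemma radial_profile_nonneg: "radial_profile M l n \<ge> 0"
  using growth_pos[of "n - l"] growth_pos[of "M - l"] by (simp add: radial_profile_def)

lemma radial_profile_below: "n < l \<Longrightarrow> radial_profile M l n = 0"
  by (simp add: radial_profile_def)

lemma radial_profile_top: "l \<le> M \<Longrightarrow> radial_profile M l M = 2 ^ (M - l)"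
  using growth_pos[of "M - l"] by (simp add: radial_profile_def)

lemma radial_profile_recurrence:
  assumes "1 \<le> n" "l \<noteq> n + 1"
  shows "2 * radial_profile M l (n + 1) - 3 * radial_profile M l n + radial_profile M l (n - 1) = 0"
proof -
  consider "n + 1 < l" | "l = n" | "l < n" using assms by linarith
  then show ?thesis
  proof cases
    case 1
    then show ?thesis by (simp add: radial_profile_below)
  next
    case 2
    have "growth 0 = 1" "growth 1 = 3 / 2" by (simp_all add: growth_def)
    moreover have "\<not> n \<le> n - 1" using assms by linarith
    ultimately show ?thesis using 2 by (simp add: radial_profile_def)
  next
    case 3
    define m where "m = n - 1 - l"
    have m: "n - l = Suc m" "n + 1 - l = Suc (Suc m)" "n - 1 - l = m"
      using 3 by (simp_all add: m_def)
    have "l \<le> n - 1" using 3 by simp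
    have "2 * radial_profile M l (n + 1) - 3 * radial_profile M l n + radial_profile M l (n - 1)
        = 2 ^ (M - l) / growth (M - l) * (2 * growth (Suc (Suc m)) - 3 * growth (Suc m) + growth m)"
      using 3 m \<open>l \<le> n - 1\<close> by (simp add: radial_profile_def diff_divide_distrib add_divide_distrib algebra_simps)
    then show ?thesis by (simp add: growth_recurrence)
  qed
qed

lemma coord_sign_snoc: "1 \<le> l \<Longrightarrow> l \<le> length z \<Longrightarrow> coord_sign l (z @ [b]) = coord_sign l z"
  by (cases z) (auto simp: coord_sign_def nth_append)

lemma coord_sign_butlast: "1 \<le> l \<Longrightarrow> l < length z \<Longrightarrow> coord_sign l (butlast z) = coord_sign l z"
  by (simp add: coord_sign_def nth_butlast)

lemma coord_sign_children:
  "1 \<le> length z \<Longrightarrow> coord_sign (length z + 1) (z @ [False]) + coord_sign (length z + 1) (z @ [True]) = 0"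
  by (simp add: coord_sign_def nth_append sign_of_def)

lemma abs_coord_sign: "\<bar>coord_sign l z\<bar> = 1"
  by (simp add: coord_sign_def sign_of_def abs_mult)

lemma radial_term_mean_value:
  assumes l: "1 \<le> l" and z: "1 \<le> length z"
  shows "radial_profile M l (length z + 1) * (coord_sign l (z @ [False]) + coord_sign l (z @ [True]))
       + radial_profile M l (length z - 1) * coord_sign l (butlast z)
     = 3 * (radial_profile M l (length z) * coord_sign l z)"
proof -
  consider "l \<le> length z" | "l = length z + 1" | "length z + 1 < l" by linarith
  then show ?thesis
  proof cases
    case 1
    have parent: "radial_profile M l (length z - 1) * coord_sign l (butlast z)
        = radial_profile M l (length z - 1) * coord_sign l z"
      using 1 z by (cases "l = length z") (auto simp: radial_profile_below coord_sign_butlast[OF l])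
    have "radial_profile M l (length z + 1) * (coord_sign l (z @ [False]) + coord_sign l (z @ [True]))
        + radial_profile M l (length z - 1) * coord_sign l z
        = (2 * radial_profile M l (length z + 1) + radial_profile M l (length z - 1)) * coord_sign l z"
      using 1 l by (simp add: coord_sign_snoc algebra_simps)
    also have "\<dots> = 3 * (radial_profile M l (length z) * coord_sign l z)"
      using radial_profile_recurrence[of "length z" l M] 1 z by simp
    finally show ?thesis unfolding parent .
  next
    case 2
    then show ?thesis using coord_sign_children[OF z] by (simp add: radial_profile_below)
  next
    case 3
    then show ?thesis by (simp add: radial_profile_below)
  qed
qed

lemma tree_solution_mean_value:
  assumes "1 \<le> length z"
  shows "tree_solution eps M (z @ [False]) + tree_solution eps M (z @ [True]) + tree_solution eps M (butlast z)
       = 3 * tree_solution eps M z"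
proof -
  have "tree_solution eps M (z @ [False]) + tree_solution eps M (z @ [True]) + tree_solution eps M (butlast z)
      = eps / 2 * (\<Sum>l = 1..M.
          radial_profile M l (length z + 1) * (coord_sign l (z @ [False]) + coord_sign l (z @ [True]))
          + radial_profile M l (length z - 1) * coord_sign l (butlast z))"
    by (simp add: tree_solution_def sum.distrib distrib_left distrib_right)
  also have "\<dots> = eps / 2 * (\<Sum>l = 1..M. 3 * (radial_profile M l (length z) * coord_sign l z))"
    by (rule arg_cong[where f = "(*) (eps / 2)"], rule sum.cong, rule refl,
        rule radial_term_mean_value[OF _ assms], simp)
  also have "\<dots> = 3 * tree_solution eps M z"
    by (simp only: tree_solution_def sum_distrib_left[symmetric] mult.left_commute)
  finally show ?thesis .
qed

lemma sum_power2_tail: "a \<le> M \<Longrightarrow> (\<Sum>l = Suc a..M. (2::real) ^ (M - l)) = 2 ^ (M - a) - 1"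
proof (induction M)
  case 0
  then show ?case by simp
next
  case (Suc M)
  show ?case
  proof (cases "a = Suc M")
    case False
    then have a: "a \<le> M" using Suc.prems by simp
    have "(\<Sum>l = Suc a..Suc M. (2::real) ^ (Suc M - l)) = (\<Sum>l = Suc a..M. (2::real) ^ (Suc M - l)) + 1"
      using a by simp
    also have "(\<Sum>l = Suc a..M. (2::real) ^ (Suc M - l)) = (\<Sum>l = Suc a..M. 2 * 2 ^ (M - l))"
      by (intro sum.cong) (auto simp: Suc_diff_le)
    also have "\<dots> = 2 * (2 ^ (M - a) - 1)"
      using Suc.IH[OF a] by (simp add: sum_distrib_left[symmetric])
    finally show ?thesis using a by (simp add: Suc_diff_le)
  qed simp
qed

lemma tree_solution_boundary:
  assumes "length z = M" "1 \<le> M"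
  shows "tree_solution eps M z = boundary_u eps M z"
proof -
  define s where "s = (\<Sum>l = 2..M. 2 ^ (M - l) * of_bool (z ! (l - 1)) :: real)"
  have boundary: "boundary_u eps M z = sign_of (z ! 0) * eps * (s + 1 / 2)"
    by (simp add: boundary_u_def s_def sign_of_def Let_def algebra_simps)
  have "(\<Sum>l = 1..M. radial_profile M l M * coord_sign l z) = (\<Sum>l = 1..M. 2 ^ (M - l) * coord_sign l z)"
    by (simp add: radial_profile_top)
  also have "\<dots> = 2 ^ (M - 1) * coord_sign 1 z + (\<Sum>l = 2..M. 2 ^ (M - l) * coord_sign l z)"
    using assms(2) by (simp add: sum.atLeast_Suc_atMost numeral_2_eq_2)
  also have "(\<Sum>l = 2..M. 2 ^ (M - l) * coord_sign l z)
           = (\<Sum>l = 2..M. sign_of (z ! 0) * (2 * (2 ^ (M - l) * of_bool (z ! (l - 1))) - 2 ^ (M - l)))"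
    by (intro sum.cong) (auto simp: coord_sign_def sign_of_def)
  also have "\<dots> = sign_of (z ! 0) * (2 * s - (\<Sum>l = 2..M. 2 ^ (M - l)))"
    unfolding s_def sum_distrib_left[symmetric] sum_subtractf by (simp only: sum_distrib_left)
  also have "(\<Sum>l = 2..M. (2::real) ^ (M - l)) = 2 ^ (M - 1) - 1"
    using sum_power2_tail[of 1 M] assms(2) by (simp add: numeral_2_eq_2)
  finally have "(\<Sum>l = 1..M. radial_profile M l M * coord_sign l z) = sign_of (z ! 0) * (2 * s + 1)"
    by (simp add: coord_sign_def algebra_simps)
  then show ?thesis
    using assms(1) boundary by (simp add: tree_solution_def algebra_simps)
qed

lemma tree_solution_root: "tree_solution eps M [] = 0"
  by (simp add: tree_solution_def radial_profile_def)

lemma dirichlet_solution_tree_solution: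
  assumes "1 \<le> M"
  shows "dirichlet_solution M (boundary_u eps M) (tree_solution eps M)"
  unfolding dirichlet_solution_def
proof (intro conjI allI impI)
  fix z :: "bool list"
  assume "length z = M"
  then show "tree_solution eps M z = boundary_u eps M z"
    using assms by (rule tree_solution_boundary)
next
  fix z :: "bool list"
  assume "1 \<le> length z \<and> length z < M"
  then show "tree_solution eps M (z @ [False]) + tree_solution eps M (z @ [True])
      + tree_solution eps M (butlast z) = 3 * tree_solution eps M z"
    by (intro tree_solution_mean_value) simp
qed (rule tree_solution_root)

definition gap_bound :: "nat \<Rightarrow> nat \<Rightarrow> nat \<Rightarrow> real" where
  "gap_bound M l n = radial_profile M l n - (\<Sum>j = Suc l..M. radial_profile M j n)"

lemma gap_bound_top: "l \<le> M \<Longrightarrow> gap_bound M l M = 1"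
  using sum_power2_tail[of l M] by (simp add: gap_bound_def radial_profile_top)

lemma gap_bound_recurrence:
  assumes "l < n" "n < M"
  shows "2 * gap_bound M l (n + 1) - 3 * gap_bound M l n + gap_bound M l (n - 1)
       = - 2 * radial_profile M (n + 1) (n + 1)"
proof -
  have jump: "2 * radial_profile M j (n + 1) - 3 * radial_profile M j n + radial_profile M j (n - 1)
      = (if j = n + 1 then 2 * radial_profile M (n + 1) (n + 1) else 0)" for j
    using radial_profile_recurrence[of n j M] assms by (simp add: radial_profile_below)
  have "2 * gap_bound M l (n + 1) - 3 * gap_bound M l n + gap_bound M l (n - 1)
     = (2 * radial_profile M l (n + 1) - 3 * radial_profile M l n + radial_profile M l (n - 1))
       - (\<Sum>j = Suc l..M. 2 * radial_profile M j (n + 1) - 3 * radial_profile M j n + radial_profile M j (n - 1))"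
    by (simp add: gap_bound_def sum.distrib sum_subtractf sum_distrib_left algebra_simps)
  also have "\<dots> = - (\<Sum>j = Suc l..M. if j = n + 1 then 2 * radial_profile M (n + 1) (n + 1) else 0)"
    unfolding jump[of l] sum.cong[OF refl jump] using assms by simp
  also have "\<dots> = - 2 * radial_profile M (n + 1) (n + 1)"
    using assms by simp
  finally show ?thesis .
qed

lemma gap_bound_first_step:
  assumes "1 \<le> l" "l < M"
  shows "gap_bound M l (l + 1) \<le> gap_bound M l l"
proof -
  obtain k where k: "M - l = Suc k" "M - (l + 1) = k"
    using assms by (metis Suc_diff_Suc Suc_eq_plus1)
  have growth_0: "growth 0 = 1" and growth_1: "growth 1 = 3 / 2" by (simp_all add: growth_def)
  have tail: "(\<Sum>j = Suc (Suc l)..M. radial_profile M j (l + 1)) = 0"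
    by (simp add: radial_profile_below)
  have "gap_bound M l l = 2 * (2 ^ k / growth (Suc k))"
    using k growth_0 by (simp add: gap_bound_def radial_profile_def)
  moreover have "gap_bound M l (l + 1) = 3 * (2 ^ k / growth (Suc k)) - 2 ^ k / growth k"
    using k growth_0 growth_1 assms tail
    by (simp add: gap_bound_def radial_profile_def sum.atLeast_Suc_atMost)
  moreover have "2 ^ k / growth (Suc k) \<le> 2 ^ k / growth k"
    using growth_pos[of k] by (intro divide_left_mono) (auto simp: growth_def)
  ultimately show ?thesis by simp
qed

lemma gap_bound_step:
  assumes "1 \<le> l" "l \<le> n" "n < M"
  shows "gap_bound M l (n + 1) \<le> gap_bound M l n"
  using assms(2,3)
proof (induction n rule: dec_induct)
  case base
  then show ?case using gap_bound_first_step assms(1) by simp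
next
  case (step n)
  have "2 * (gap_bound M l (n + 2) - gap_bound M l (n + 1)) \<le> gap_bound M l (n + 1) - gap_bound M l n"
    using gap_bound_recurrence[of l "n + 1" M] radial_profile_nonneg[of M "n + 2" "n + 2"] step.hyps step.prems
    by (simp add: algebra_simps)
  then show ?case using step by simp
qed

lemma gap_bound_ge_one:
  assumes "1 \<le> l" "l \<le> n" "n \<le> M"
  shows "1 \<le> gap_bound M l n"
  using assms(3)
proof (induction n rule: inc_induct)
  case base
  then show ?case using assms by (simp add: gap_bound_top)
next
  case (step n)
  then show ?case using gap_bound_step[of l n M] assms by simp
qed

lemma coord_sign_common_prefix:
  assumes "1 \<le> j" "j \<le> length p"
  shows "coord_sign j (p @ xs) = coord_sign j (p @ ys)"
proof -
  have "0 < length p" "j - 1 < length p" using assms by linarith+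
  then have "(p @ xs) ! 0 = (p @ ys) ! 0" "(p @ xs) ! (j - 1) = (p @ ys) ! (j - 1)"
    by (simp_all add: nth_append)
  then show ?thesis by (simp add: coord_sign_def)
qed

lemma coord_sign_first_difference:
  assumes "a \<noteq> b"
  shows "\<bar>coord_sign (length p + 1) (p @ a # xs) - coord_sign (length p + 1) (p @ b # ys)\<bar> = 2"
  using assms by (cases p) (auto simp: coord_sign_def sign_of_def nth_append)

lemma abs_sum_ge_leading_term:
  fixes w c :: "nat \<Rightarrow> real"
  assumes "l \<le> M" "\<bar>c l\<bar> = 2" "\<And>j. \<bar>c j\<bar> \<le> 2" "\<And>j. 0 \<le> w j"
  shows "2 * (w l - (\<Sum>j = Suc l..M. w j)) \<le> \<bar>\<Sum>j = l..M. w j * c j\<bar>"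
proof -
  have "\<bar>\<Sum>j = Suc l..M. w j * c j\<bar> \<le> (\<Sum>j = Suc l..M. 2 * w j)"
    using assms(3,4) by (intro order_trans[OF sum_abs] sum_mono) (simp add: abs_mult mult.commute mult_left_mono)
  moreover have "\<bar>w l * c l\<bar> = 2 * w l"
    using assms(2,4) by (simp add: abs_mult)
  moreover have "(\<Sum>j = l..M. w j * c j) = w l * c l + (\<Sum>j = Suc l..M. w j * c j)"
    using assms(1) by (simp add: sum.atLeast_Suc_atMost)
  ultimately show ?thesis by (simp add: sum_distrib_left[symmetric])
qed

lemma tree_solution_separates:
  assumes eps: "eps > 0" and len: "length z = n" "length y = n" "n \<le> M" and "z \<noteq> y"
  shows "eps \<le> \<bar>tree_solution eps M z - tree_solution eps M y\<bar>"
proof -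
  have "z \<parallel> y" using len \<open>z \<noteq> y\<close> by (auto simp: parallel_def prefix_def)
  from parallel_decomp[OF this]
  obtain p a z' b y' where "a \<noteq> b" and z: "z = p @ a # z'" and y: "y = p @ b # y'"
    by blast
  define l where "l = length p + 1"
  have l: "1 \<le> l" "l \<le> n" using len z by (auto simp: l_def)
  define c where "c j = coord_sign j z - coord_sign j y" for j
  have "tree_solution eps M z - tree_solution eps M y = eps / 2 * (\<Sum>j = 1..M. radial_profile M j n * c j)"
    using len by (simp add: tree_solution_def c_def sum_subtractf algebra_simps)
  also have "(\<Sum>j = 1..M. radial_profile M j n * c j) = (\<Sum>j = l..M. radial_profile M j n * c j)"
    using coord_sign_common_prefix l
    by (intro sum.mono_neutral_right) (auto simp: c_def z y l_def)
  finally have diff: "\<bar>tree_solution eps M z - tree_solution eps M y\<bar>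
      = eps / 2 * \<bar>\<Sum>j = l..M. radial_profile M j n * c j\<bar>"
    using eps by (simp only: abs_mult)
  have "\<bar>c j\<bar> \<le> 2" for j
    using abs_coord_sign[of j z] abs_coord_sign[of j y] by (simp add: c_def)
  moreover have "\<bar>c l\<bar> = 2"
    using coord_sign_first_difference[OF \<open>a \<noteq> b\<close>] by (simp add: c_def z y l_def)
  ultimately have "2 * gap_bound M l n \<le> \<bar>\<Sum>j = l..M. radial_profile M j n * c j\<bar>"
    unfolding gap_bound_def using l len
    by (intro abs_sum_ge_leading_term radial_profile_nonneg) simp_all
  moreover have "1 \<le> gap_bound M l n" using gap_bound_ge_one l len by simp
  ultimately have "2 \<le> \<bar>\<Sum>j = l..M. radial_profile M j n * c j\<bar>" by simp
  then have "eps / 2 * 2 \<le> eps / 2 * \<bar>\<Sum>j = l..M. radial_profile M j n * c j\<bar>"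
    using eps by (intro mult_left_mono) auto
  then show ?thesis using diff by simp
qed

theorem lemma2p4:
  fixes eps :: real and M :: nat and h :: "bool list \<Rightarrow> real"
  assumes "eps > 0" and "M \<ge> 1"
    and "dirichlet_solution M (boundary_u eps M) h"
  shows "\<forall>n \<le> M. \<forall>z y. length z = n \<and> length y = n \<and> z \<noteq> y \<longrightarrow> \<bar>h z - h y\<bar> \<ge> eps"
proof (intro allI impI)
  fix n and z y :: "bool list" assume "n \<le> M" and zy: "length z = n \<and> length y = n \<and> z \<noteq> y"
  have "h w = tree_solution eps M w" if "length w \<le> M" for w
    using dirichlet_solution_unique[OF assms(3) dirichlet_solution_tree_solution[OF assms(2)] that] .
  then show "\<bar>h z - h y\<bar> \<ge> eps"
    using tree_solution_separates[OF assms(1)] \<open>n \<le> M\<close> zy by simp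
qed

end
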